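(* Let $d \geq 2$ and let $\Gamma \leq \operatorname{GL}_d(\mathbb{Z})$ be a subgroup such that the linear action of $\Gamma$ on $\mathbb{R}^d$ is irreducible and $\Gamma$ is generated by a finite set of unipotent matrices. Then for every $v \in \mathbb{Z}^d \setminus \{0\}$ there exist a sequence $\gamma_1, \gamma_2, \ldots \in \Gamma$ and polynomials $p_1(t), \ldots, p_d(t) \in \mathbb{Z}[t]$ such that $\gamma_n v = (p_1(n), \ldots, p_d(n))$ for all $n \geq 1$, and $1, p_1(t), \ldots, p_d(t)$ are linearly independent (i.e., no non-trivial linear combination of $p_1, \ldots, p_d$ is constant). In particular the sequence $(\gamma_n v)_n$ is not contained in any proper affine subspace of $\mathbb{R}^d$. *)

theory Defs
  imports "HOL-Analysis.Analysis" "HOL-Computational_Algebra.Polynomial"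
begin

definition GL_int :: "(int^'n^'n) set" where
  "GL_int = {A. \<exists>B. A ** B = mat 1 \<and> B ** A = mat 1}"

definition is_subgroup_GL :: "(int^'n^'n) set \<Rightarrow> bool" where
  "is_subgroup_GL H \<longleftrightarrow> H \<subseteq> GL_int \<and> mat 1 \<in> H \<and>
     (\<forall>A\<in>H. \<forall>B\<in>H. A ** B \<in> H) \<and>
     (\<forall>A\<in>H. \<exists>B\<in>H. A ** B = mat 1 \<and> B ** A = mat 1)"

definition generated_GL :: "(int^'n^'n) set \<Rightarrow> (int^'n^'n) set" where
  "generated_GL S = \<Inter>{H. is_subgroup_GL H \<and> S \<subseteq> H}"

definition unipotent :: "int^'n^'n \<Rightarrow> bool" where
  "unipotent A \<longleftrightarrow> (\<exists>k. ((\<lambda>M. (A - mat 1) ** M) ^^ k) (mat 1) = 0)"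

definition real_mat :: "int^'n^'n \<Rightarrow> real^'n^'n" where
  "real_mat A = (\<chi> i j. real_of_int (A $ i $ j))"

definition irreducible_action :: "(int^'n^'n) set \<Rightarrow> bool" where
  "irreducible_action G \<longleftrightarrow>
     (\<forall>W::(real^'n) set. subspace W \<and> (\<forall>g\<in>G. \<forall>w\<in>W. real_mat g *v w \<in> W)
        \<longrightarrow> W = {0} \<or> W = UNIV)"

end

theory Submission
  imports Defs
begin

text \<open>
  Call a family \<open>P\<close> of integer polynomials a polynomial orbit of \<open>v\<close> if \<open>P(0) = v\<close> and
  \<open>P(n) = \<gamma>\<^sub>n v\<close> with \<open>\<gamma>\<^sub>n \<in> \<Gamma>\<close> for \<open>n \<ge> 1\<close>, and choose one for which the span \<open>R\<close> of the
  differences \<open>P(x) - P(0)\<close> has maximal dimension. For a unipotent generator \<open>u = 1 + N\<close> with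
  \<open>N^D = 0\<close>, the family \<open>n \<mapsto> u^(D! n^e) P(n) = \<Sum>\<^sub>k<D binom(D! n^e, k) N^k P(n)\<close> is again a
  polynomial orbit. If \<open>e\<close> exceeds the degrees in \<open>P\<close>, a Kronecker substitution shows that a
  linear form constant along this family is constant along \<open>P\<close> and kills \<open>N P\<close>; by maximality
  therefore \<open>N P(x) \<in> R\<close>. Hence \<open>R\<close> and the span of all \<open>P(x)\<close> are invariant under the
  generators, so under \<open>\<Gamma>\<close>. By irreducibility \<open>R = \<real>^d\<close>, since \<open>R = 0\<close> would make the line
  \<open>\<real> v\<close> invariant; and \<open>R = \<real>^d\<close> says exactly that \<open>1, p\<^sub>1, \<dots>, p\<^sub>d\<close> are linearly independent.
\<close>

definition real_vec :: "int^'n \<Rightarrow> real^'n" where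
  "real_vec w = (\<chi> i. real_of_int (w $ i))"

lemma real_vec_eq_0_iff: "real_vec a = 0 \<longleftrightarrow> a = 0"
  by (simp add: real_vec_def vec_eq_iff)

lemma real_vec_mult: "real_vec (A *v w) = real_mat A *v real_vec w"
  by (simp add: real_vec_def real_mat_def matrix_vector_mult_def vec_eq_iff)

lemma real_mat_mult: "real_mat (A ** B) = real_mat A ** real_mat B"
  by (simp add: real_mat_def matrix_matrix_mult_def vec_eq_iff)

lemma real_mat_one: "real_mat (mat 1) = mat 1"
  by (simp add: real_mat_def mat_def vec_eq_iff)

lemma real_mat_zero: "real_mat 0 = 0"
  by (simp add: real_mat_def vec_eq_iff)

lemma real_mat_diff: "real_mat (A - B) = real_mat A - real_mat B"
  by (simp add: real_mat_def vec_eq_iff)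

definition mat_pow :: "'a::semiring_1^'n^'n \<Rightarrow> nat \<Rightarrow> 'a^'n^'n" where
  "mat_pow A k = ((\<lambda>M. A ** M) ^^ k) (mat 1)"

lemma mat_pow_0 [simp]: "mat_pow A 0 = mat 1"
  by (simp add: mat_pow_def)

lemma mat_pow_Suc: "mat_pow A (Suc k) = A ** mat_pow A k"
  by (simp add: mat_pow_def)

lemma mat_pow_add: "mat_pow A (a + b) = mat_pow A a ** mat_pow A b"
  by (induction a) (simp_all add: mat_pow_Suc matrix_mul_assoc)

lemma mat_pow_eq_0_imp_pos:
  assumes "mat_pow (A :: 'a::{semiring_1,zero_neq_one}^'n^'n) D = 0"
  shows "D > 0"
proof (rule ccontr)
  assume "\<not> D > 0"
  then have "(mat 1 :: 'a^'n^'n) $ i $ i = 0" for i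
    using assms by simp
  then show False
    by (simp add: mat_def)
qed

lemma mat_pow_eq_0_mono: "mat_pow A D = 0 \<Longrightarrow> D \<le> k \<Longrightarrow> mat_pow A k = 0"
  using mat_pow_add[of A "k - D" D] by simp

lemma real_mat_mat_pow: "real_mat (mat_pow A k) = mat_pow (real_mat A) k"
  by (induction k) (simp_all add: mat_pow_Suc real_mat_mult real_mat_one)

lemma unipotent_iff_mat_pow: "unipotent A \<longleftrightarrow> (\<exists>D. mat_pow (A - mat 1) D = 0)"
  by (simp add: unipotent_def mat_pow_def)

lemma mat_pow_in_subgroup: "is_subgroup_GL G \<Longrightarrow> A \<in> G \<Longrightarrow> mat_pow A k \<in> G"
  by (induction k) (auto simp: is_subgroup_GL_def mat_pow_Suc)

lemma mat_pow_one_plus_nilpotent: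
  fixes N :: "real^'n^'n"
  assumes nil: "mat_pow N D = 0"
  shows "mat_pow (mat 1 + N) m *v w = (\<Sum>k<D. real (m choose k) *\<^sub>R (mat_pow N k *v w))"
proof -
  have "D \<noteq> 0"
    using mat_pow_eq_0_imp_pos[OF nil] by simp
  then obtain D' where D: "D = Suc D'"
    using not0_implies_Suc by blast
  define x where "x k = mat_pow N k *v w" for k
  have xD: "x D = 0"
    using nil by (simp add: x_def)
  show ?thesis
    unfolding x_def[symmetric]
  proof (induction m)
    case 0
    show ?case
      by (simp add: D x_def sum.lessThan_Suc_shift del: sum.lessThan_Suc)
  next
    case (Suc m)
    define b where "b k = real (m choose k)" for k
    have "mat_pow (mat 1 + N) (Suc m) *v w = (mat 1 + N) *v (\<Sum>k<D. b k *\<^sub>R x k)"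
      using Suc.IH by (simp add: mat_pow_Suc b_def flip: matrix_vector_mul_assoc)
    also have "\<dots> = (\<Sum>k<D. b k *\<^sub>R x k) + (\<Sum>k<D. b k *\<^sub>R x (Suc k))"
    proof -
      have "N *v (\<Sum>k<D. b k *\<^sub>R x k) = (\<Sum>k<D. b k *\<^sub>R x (Suc k))"
        by (simp add: vec.sum x_def mat_pow_Suc matrix_vector_mul_assoc
            matrix_vector_mult_scaleR del: sum.lessThan_Suc)
      then show ?thesis
        by (simp only: matrix_vector_mult_add_rdistrib matrix_vector_mul_lid)
    qed
    also have "\<dots> = x 0 + (\<Sum>i<D'. (b (Suc i) + b i) *\<^sub>R x (Suc i))"
    proof -
      have "(\<Sum>k<D. b k *\<^sub>R x k) = x 0 + (\<Sum>i<D'. b (Suc i) *\<^sub>R x (Suc i))"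
        by (simp add: D sum.lessThan_Suc_shift b_def del: sum.lessThan_Suc)
      moreover have "(\<Sum>k<D. b k *\<^sub>R x (Suc k)) = (\<Sum>i<D'. b i *\<^sub>R x (Suc i))"
        using xD by (simp add: D)
      ultimately show ?thesis
        by (simp add: scaleR_add_left sum.distrib)
    qed
    also have "\<dots> = (\<Sum>k<D. real (Suc m choose k) *\<^sub>R x k)"
      by (simp add: D sum.lessThan_Suc_shift b_def add.commute del: sum.lessThan_Suc)
    finally show ?case .
  qed
qed

lemma poly_map_poly_of_int:
  "poly (map_poly of_int p) (of_int x :: 'a::comm_ring_1) = of_int (poly p x)"
  by (induct p) (simp_all add: map_poly_pCons)

lemma poly_eqI_of_int:
  fixes p q :: "'a::{idom,ring_char_0} poly"
  assumes "\<And>x::int. poly p (of_int x) = poly q (of_int x)"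
  shows "p = q"
proof (rule ccontr)
  assume "p \<noteq> q"
  then have "finite {x. poly (p - q) x = 0}"
    by (intro poly_roots_finite) simp
  moreover have "range (of_int :: int \<Rightarrow> 'a) \<subseteq> {x. poly (p - q) x = 0}"
    using assms by auto
  ultimately have "finite (range (of_int :: int \<Rightarrow> 'a))"
    using finite_subset by blast
  then show False
    using finite_imageD[of "of_int :: int \<Rightarrow> 'a" UNIV] by (simp add: inj_on_def)
qed

lemma kronecker_substitution_eq_0:
  fixes H :: "'a::comm_ring_1 poly poly"
  assumes "\<And>j. degree (coeff H j) < e" and "poly H (monom 1 e) = 0"
  shows "H = 0"
  using assms
proof (induction H rule: pCons_induct)
  case (pCons a H)
  have deg_a: "degree a < e" and deg_H: "\<And>j. degree (coeff H j) < e"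
    using pCons.prems(1)[of 0] pCons.prems(1)[of "Suc j" for j] by simp_all
  define q where "q = poly H (monom 1 e)"
  have sum0: "a + monom 1 e * q = 0"
    using pCons.prems(2) by (simp add: q_def)
  have "a = 0"
  proof (rule poly_eqI)
    fix i
    show "coeff a i = coeff 0 i"
    proof (cases "i < e")
      case True
      then show ?thesis
        using arg_cong[OF sum0, of "\<lambda>p. coeff p i"] by (simp add: coeff_monom_mult)
    next
      case False
      then show ?thesis
        using deg_a by (simp add: coeff_eq_0)
    qed
  qed
  moreover have "q = 0"
  proof (rule poly_eqI)
    fix i
    show "coeff q i = coeff 0 i"
      using arg_cong[OF sum0, of "\<lambda>p. coeff p (e + i)"] \<open>a = 0\<close>
      by (simp add: coeff_monom_mult)
  qed
  ultimately show ?case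
    using pCons.IH[OF deg_H] by (simp add: q_def)
qed simp

text \<open>The coefficients of \<open>H(T) = \<Sum>\<^sub>k B\<^sub>k(T) g\<^sub>k\<close> as a polynomial in \<open>T\<close> have degree \<open>< e\<close>,
  so \<open>H\<close> is determined by the substitution \<open>T = X^e\<close>.\<close>
lemma kronecker_substitution_const:
  fixes B g :: "nat \<Rightarrow> real poly"
  assumes e: "e > 0" and deg: "\<And>k. degree (g k) < e"
    and const: "\<And>x::int. (\<Sum>k<D. poly (B k) (of_int x ^ e) * poly (g k) (of_int x)) = a"
  shows "(\<Sum>k<D. smult (poly (B k) t) (g k)) = [:a:]"
proof -
  define H where "H = (\<Sum>k<D. map_poly (\<lambda>b. [:b:]) (B k) * [:g k:]) - [:[:a:]:]"
  have poly_H: "poly H q = (\<Sum>k<D. pcompose (B k) q * g k) - [:a:]" for q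
    by (simp add: H_def poly_sum pcompose_altdef mult.commute)
  have "degree (coeff H j) < e" for j
  proof -
    have "coeff H j = (\<Sum>k<D. smult (coeff (B k) j) (g k)) - coeff [:[:a:]:] j"
      by (simp add: H_def coeff_sum coeff_map_poly mult.commute)
    moreover have "degree (\<Sum>k<D. smult (coeff (B k) j) (g k)) < e"
      using e deg degree_smult_le le_less_trans by (intro degree_sum_less) blast+
    moreover have "degree (coeff [:[:a:]:] j) < e"
      using e by (cases j) (simp_all add: coeff_pCons)
    ultimately show ?thesis
      using degree_diff_less by metis
  qed
  moreover have "poly H (monom 1 e) = 0"
    by (rule poly_eqI_of_int)
      (simp add: poly_H poly_sum poly_pcompose poly_monom const)
  ultimately have "H = 0"
    by (rule kronecker_substitution_eq_0)
  then show ?thesis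
    using poly_H[of "[:t:]"] by (simp add: pcompose_pCons_0)
qed

definition binomial_poly :: "nat \<Rightarrow> nat \<Rightarrow> int poly" where
  "binomial_poly K k = (if k = 0 then 1
     else smult (int K div fact k) ([:0, 1:] * (\<Prod>i\<in>{1..<k}. [:- int i, int K:])))"

lemma poly_binomial_poly:
  assumes "fact k dvd K"
  shows "poly (map_poly of_int (binomial_poly K k)) t = (real K * t) gchoose k"
proof (cases "k = 0")
  case False
  have "(fact k :: int) dvd int K"
    using assms by (metis of_nat_dvd_iff of_nat_fact)
  then have "real_of_int (int K div fact k) = real K / fact k"
    by (simp add: real_of_int_div)
  then have "map_poly of_int (binomial_poly K k) =
      smult (real K / fact k) ([:0, 1:] * (\<Prod>i\<in>{1..<k}. [:- real i, real K:]))"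
    using False by (intro poly_eqI_of_int) (simp add: binomial_poly_def poly_map_poly_of_int poly_prod)
  moreover have "(\<Prod>i=0..<k. real K * t - real i) = real K * t * (\<Prod>i\<in>{1..<k}. real K * t - real i)"
    using False by (simp add: prod.atLeast_Suc_lessThan)
  ultimately show ?thesis
    by (simp add: gbinomial_prod_rev poly_prod mult.commute)
qed (simp add: binomial_poly_def)

definition poly_vec :: "('n \<Rightarrow> int poly) \<Rightarrow> int \<Rightarrow> real^'n" where
  "poly_vec P x = (\<chi> i. real_of_int (poly (P i) x))"

definition linear_form_poly :: "real^'n \<Rightarrow> int^'n^'n \<Rightarrow> ('n \<Rightarrow> int poly) \<Rightarrow> real poly" where
  "linear_form_poly c M P =
     (\<Sum>i\<in>UNIV. smult (c $ i) (\<Sum>j\<in>UNIV. smult (of_int (M $ i $ j)) (map_poly of_int (P j))))"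

lemma poly_linear_form_poly:
  "poly (linear_form_poly c M P) (of_int x) = c \<bullet> (real_mat M *v poly_vec P x)"
  by (simp add: linear_form_poly_def poly_sum inner_vec_def matrix_vector_mult_def real_mat_def
      poly_vec_def poly_map_poly_of_int sum_distrib_left mult.assoc)

lemma degree_linear_form_poly_less:
  assumes "\<And>j. degree (P j) < e"
  shows "degree (linear_form_poly c M P) < e"
proof -
  have "e > 0"
    using assms[of undefined] by simp
  then show ?thesis
    unfolding linear_form_poly_def
    by (intro degree_sum_less le_less_trans[OF degree_smult_le])
      (simp_all add: degree_map_poly assms)
qed

text \<open>If \<open>mat_pow N D = 0\<close>, this is \<open>n \<mapsto> (1 + N)^(D! n^e) P(n)\<close> expanded binomially; as
  \<open>k! dvd D!\<close> for \<open>k < D\<close>, each coefficient \<open>binom(D! n^e, k)\<close> is an integer polynomial in \<open>n\<close>.\<close>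
definition unipotent_twist :: "int^'n^'n \<Rightarrow> nat \<Rightarrow> nat \<Rightarrow> ('n \<Rightarrow> int poly) \<Rightarrow> 'n \<Rightarrow> int poly" where
  "unipotent_twist N D e P i =
     (\<Sum>k<D. pcompose (binomial_poly (fact D) k) (monom 1 e) *
        (\<Sum>j\<in>UNIV. smult (mat_pow N k $ i $ j) (P j)))"

lemma poly_vec_unipotent_twist:
  "poly_vec (unipotent_twist N D e P) x =
     (\<Sum>k<D. ((fact D * of_int x ^ e) gchoose k) *\<^sub>R (real_mat (mat_pow N k) *v poly_vec P x))"
proof -
  have "real_of_int (poly (binomial_poly (fact D) k) y) = (fact D * of_int y) gchoose k"
    if "k < D" for k y
    using that poly_binomial_poly[of k "fact D" "of_int y"]
    by (simp add: fact_dvd poly_map_poly_of_int)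
  then show ?thesis
    by (simp add: vec_eq_iff poly_vec_def unipotent_twist_def poly_sum poly_pcompose poly_monom
        real_mat_def matrix_vector_mult_def sum_distrib_left mult.assoc mult.left_commute)
qed

definition polynomial_orbit :: "(int^'n^'n) set \<Rightarrow> int^'n \<Rightarrow> ('n \<Rightarrow> int poly) \<Rightarrow> bool" where
  "polynomial_orbit G v P \<longleftrightarrow>
     (\<exists>\<gamma>. \<forall>n\<ge>1. \<gamma> n \<in> G \<and> \<gamma> n *v v = (\<chi> i. poly (P i) (int n))) \<and> poly_vec P 0 = real_vec v"

lemma polynomial_orbit_const: "is_subgroup_GL G \<Longrightarrow> polynomial_orbit G v (\<lambda>i. [:v $ i:])"
  unfolding polynomial_orbit_def
  by (intro conjI exI[of _ "\<lambda>n. mat 1"]) (auto simp: is_subgroup_GL_def poly_vec_def real_vec_def)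

lemma polynomial_orbit_unipotent_twist:
  assumes sg: "is_subgroup_GL G" and u: "u \<in> G" and nil: "mat_pow (u - mat 1) D = 0"
    and e: "e > 0" and P: "polynomial_orbit G v P"
  shows "polynomial_orbit G v (unipotent_twist (u - mat 1) D e P)"
proof -
  obtain \<gamma> where \<gamma>: "\<And>n. n \<ge> 1 \<Longrightarrow> \<gamma> n \<in> G \<and> \<gamma> n *v v = (\<chi> i. poly (P i) (int n))"
    and P0: "poly_vec P 0 = real_vec v"
    using P unfolding polynomial_orbit_def by blast
  let ?N = "real_mat (u - mat 1)"
  have "mat_pow ?N D = 0"
    using nil by (simp add: real_mat_zero flip: real_mat_mat_pow)
  moreover have "real_mat u = mat 1 + ?N"
    by (simp add: real_mat_diff real_mat_one)
  ultimately have power: "real_vec (mat_pow u m *v y) =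
      (\<Sum>k<D. (real m gchoose k) *\<^sub>R (mat_pow ?N k *v real_vec y))" for m y
    by (simp add: real_vec_mult real_mat_mat_pow mat_pow_one_plus_nilpotent binomial_gbinomial)
  define \<gamma>' where "\<gamma>' n = mat_pow u (fact D * n ^ e) ** \<gamma> n" for n
  show ?thesis
    unfolding polynomial_orbit_def
  proof (intro conjI exI allI impI)
    fix n :: nat
    assume n: "n \<ge> 1"
    show "\<gamma>' n \<in> G"
      using \<gamma>[OF n] mat_pow_in_subgroup[OF sg u] sg by (auto simp: \<gamma>'_def is_subgroup_GL_def)
    have "real_vec (\<gamma> n *v v) = poly_vec P (int n)"
      using \<gamma>[OF n] by (simp add: real_vec_def poly_vec_def)
    then have "real_vec (\<gamma>' n *v v) = poly_vec (unipotent_twist (u - mat 1) D e P) (int n)"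
      by (simp add: \<gamma>'_def power poly_vec_unipotent_twist real_mat_mat_pow
          flip: matrix_vector_mul_assoc)
    then show "\<gamma>' n *v v = (\<chi> i. poly (unipotent_twist (u - mat 1) D e P i) (int n))"
      by (simp add: poly_vec_def real_vec_def vec_eq_iff)
  next
    obtain D' where "D = Suc D'"
      using mat_pow_eq_0_imp_pos[OF nil] not0_implies_Suc by blast
    then show "poly_vec (unipotent_twist (u - mat 1) D e P) 0 = real_vec v"
      using e P0 by (simp add: poly_vec_unipotent_twist zero_power gbinomial_0_left real_mat_one
          sum.lessThan_Suc_shift del: sum.lessThan_Suc)
  qed
qed

lemma unipotent_twist_orthogonal:
  fixes c w :: "real^'n"
  assumes D: "2 \<le> D" and deg: "\<And>j. degree (P j) < e"
    and orth: "\<And>x. orthogonal c (poly_vec (unipotent_twist N D e P) x - w)"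
  shows "orthogonal c (poly_vec P x - w)" and "orthogonal c (real_mat N *v poly_vec P x)"
proof -
  define g where "g k = linear_form_poly c (mat_pow N k) P" for k
  define B :: "nat \<Rightarrow> real poly" where "B k = map_poly of_int (binomial_poly (fact D) k)" for k
  have B: "poly (B k) t = (fact D * t) gchoose k" if "k < D" for k t
    using that poly_binomial_poly[of k "fact D" t] by (simp add: B_def fact_dvd)
  have "0 < e"
    using deg[of undefined] by simp
  moreover have "degree (g k) < e" for k
    using deg by (simp add: g_def degree_linear_form_poly_less)
  moreover have "(\<Sum>k<D. poly (B k) (of_int x ^ e) * poly (g k) (of_int x)) = c \<bullet> w" for x
  proof -
    have "c \<bullet> w = c \<bullet> poly_vec (unipotent_twist N D e P) x"
      using orth[of x] by (simp add: orthogonal_def inner_diff_right)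
    then show ?thesis
      by (simp add: poly_vec_unipotent_twist inner_sum_right g_def poly_linear_form_poly B)
  qed
  ultimately have const: "(\<Sum>k<D. smult (poly (B k) t) (g k)) = [:c \<bullet> w:]" for t
    by (rule kronecker_substitution_const)
  txt \<open>At \<open>t = 0\<close> only \<open>g 0\<close> survives; at \<open>t = 1/D!\<close> the coefficients become
    \<open>binom(1, k)\<close>, which isolates \<open>g 0 + g 1\<close>.\<close>
  have "(\<Sum>k<D. smult (poly (B k) 0) (g k)) = (\<Sum>k<1. smult (poly (B k) 0) (g k))"
    by (rule sum.mono_neutral_right) (use D in \<open>auto simp: B gbinomial_0_left\<close>)
  then have g0: "g 0 = [:c \<bullet> w:]"
    using const[of 0] D by (simp add: B)
  have B1: "poly (B k) (1 / fact D) = real (1 choose k)" if "k < D" for k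
    using that binomial_gbinomial[of 1 k, where 'a = real] by (simp add: B)
  have "(\<Sum>k<D. smult (poly (B k) (1 / fact D)) (g k)) = (\<Sum>k<2. smult (real (1 choose k)) (g k))"
    by (rule sum.mono_neutral_cong_right) (use D in \<open>auto simp: B1\<close>)
  then have "g 0 + g 1 = [:c \<bullet> w:]"
    using const[of "1 / fact D"] by (simp add: numeral_2_eq_2)
  with g0 have g1: "g 1 = 0"
    by simp
  show "orthogonal c (poly_vec P x - w)"
    using arg_cong[OF g0, of "\<lambda>p. poly p (of_int x)"]
    by (simp add: g_def poly_linear_form_poly real_mat_one orthogonal_def inner_diff_right)
  show "orthogonal c (real_mat N *v poly_vec P x)"
    using arg_cong[OF g1, of "\<lambda>p. poly p (of_int x)"]
    by (simp add: g_def poly_linear_form_poly mat_pow_Suc orthogonal_def)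
qed

lemma in_span_orthogonalI:
  fixes y :: "'a::euclidean_space"
  assumes "\<And>c. (\<And>a. a \<in> A \<Longrightarrow> orthogonal c a) \<Longrightarrow> orthogonal c y"
  shows "y \<in> span A"
proof (rule ccontr)
  assume y: "y \<notin> span A"
  then have "span A \<subset> span (insert y A)"
    by (metis insertI1 psubsetI span_base span_mono subset_insertI)
  then obtain c where c: "c \<noteq> 0" "c \<in> span (insert y A)" "\<And>z. z \<in> span A \<Longrightarrow> orthogonal c z"
    using orthogonal_to_subspace_exists_gen by metis
  then have "orthogonal c y"
    using assms span_base by blast
  then have "orthogonal c z" if "z \<in> insert y A" for z
    using that c(3) span_base by blast
  then have "orthogonal c c"
    using orthogonal_to_span[OF c(2)] by blast
  then show False
    using c(1) orthogonal_self by blast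
qed

definition orbit_span :: "('n \<Rightarrow> int poly) \<Rightarrow> (real^'n) set" where
  "orbit_span P = span (range (\<lambda>x. poly_vec P x - poly_vec P 0))"

lemma polynomial_orbit_unipotent_extend:
  assumes sg: "is_subgroup_GL G" and u: "u \<in> G" "unipotent u" and P: "polynomial_orbit G v P"
  obtains P' where "polynomial_orbit G v P'" and "orbit_span P \<subseteq> orbit_span P'"
    and "\<And>x. real_mat (u - mat 1) *v poly_vec P x \<in> orbit_span P'"
proof -
  obtain D where nil: "mat_pow (u - mat 1) D = 0"
    using u(2) unipotent_iff_mat_pow by blast
  define e where "e = Suc (\<Sum>i\<in>UNIV. degree (P i))"
  have deg: "degree (P j) < e" for j
    unfolding e_def less_Suc_eq_le by (intro member_le_sum) simp_all
  txt \<open>Any nilpotency exponent \<open>\<ge> 2\<close> will do; \<open>D + 2\<close> avoids a case distinction.\<close>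
  define P' where "P' = unipotent_twist (u - mat 1) (D + 2) e P"
  have P': "polynomial_orbit G v P'"
    unfolding P'_def using mat_pow_eq_0_mono[OF nil]
    by (intro polynomial_orbit_unipotent_twist[OF sg u(1) _ _ P]) (simp_all add: e_def)
  have "poly_vec P' 0 = poly_vec P 0"
    using P P' by (simp add: polynomial_orbit_def)
  then have orth: "orthogonal c (poly_vec P x - poly_vec P 0) \<and>
      orthogonal c (real_mat (u - mat 1) *v poly_vec P x)"
    if "\<And>a. a \<in> range (\<lambda>x. poly_vec P' x - poly_vec P' 0) \<Longrightarrow> orthogonal c a" for c x
    using unipotent_twist_orthogonal[of "D + 2" P e c "u - mat 1" "poly_vec P 0"] that deg
    by (auto simp: P'_def)
  have "poly_vec P x - poly_vec P 0 \<in> orbit_span P'" for x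
    unfolding orbit_span_def by (intro in_span_orthogonalI) (use orth in blast)
  then have "orbit_span P \<subseteq> orbit_span P'"
    unfolding orbit_span_def[of P] by (intro span_minimal) (auto simp: orbit_span_def)
  moreover have "real_mat (u - mat 1) *v poly_vec P x \<in> orbit_span P'" for x
    unfolding orbit_span_def by (intro in_span_orthogonalI) (use orth in blast)
  ultimately show ?thesis
    using P' that by blast
qed

lemma maximal_polynomial_orbit_increment:
  assumes "is_subgroup_GL G" "u \<in> G" "unipotent u" "polynomial_orbit G v P"
    and max: "\<And>Q. polynomial_orbit G v Q \<Longrightarrow> dim (orbit_span Q) \<le> dim (orbit_span P)"
  shows "real_mat (u - mat 1) *v poly_vec P x \<in> orbit_span P"
proof -
  obtain P' where P': "polynomial_orbit G v P'" "orbit_span P \<subseteq> orbit_span P'"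
    and incr: "\<And>x. real_mat (u - mat 1) *v poly_vec P x \<in> orbit_span P'"
    using polynomial_orbit_unipotent_extend[OF assms(1-4)] by blast
  have "orbit_span P = orbit_span P'"
    using P' max[OF P'(1)] by (intro subspace_dim_equal) (simp_all add: orbit_span_def)
  then show ?thesis
    using incr by simp
qed

lemma span_range_invariant:
  fixes M :: "real^'n^'n" and f :: "'a \<Rightarrow> real^'n"
  assumes incr: "\<And>x. M *v f x \<in> span (range (\<lambda>x. f x - f x0))"
  shows "y \<in> span (range f) \<Longrightarrow> (mat 1 + M) *v y \<in> span (range f)"
    and "y \<in> span (range (\<lambda>x. f x - f x0)) \<Longrightarrow> (mat 1 + M) *v y \<in> span (range (\<lambda>x. f x - f x0))"
proof -
  let ?R = "span (range (\<lambda>x. f x - f x0))"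
  have RV: "?R \<subseteq> span (range f)"
    by (intro span_minimal) (auto intro: span_diff span_base)
  have "(\<lambda>y. M *v y) ` span (range f) = span ((\<lambda>y. M *v y) ` range f)"
    using linear_span_image[of "\<lambda>y. M *v y"] by (simp add: matrix_vector_mul_linear)
  also have "\<dots> \<subseteq> ?R"
    using incr by (intro span_minimal) auto
  finally have MV: "M *v y \<in> ?R" if "y \<in> span (range f)" for y
    using that by blast
  show "y \<in> span (range f) \<Longrightarrow> (mat 1 + M) *v y \<in> span (range f)"
    using MV RV by (auto simp: matrix_vector_mult_add_rdistrib intro: span_add)
  show "y \<in> ?R \<Longrightarrow> (mat 1 + M) *v y \<in> ?R"
    using MV RV by (auto simp: matrix_vector_mult_add_rdistrib intro: span_add)
qed

lemma inverse_preserves_subspace: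
  fixes A B :: "real^'n^'n"
  assumes BA: "B ** A = mat 1" and X: "subspace X" and AX: "\<And>w. w \<in> X \<Longrightarrow> A *v w \<in> X"
    and w: "w \<in> X"
  shows "B *v w \<in> X"
proof -
  have lin: "linear ((*v) A)"
    by (simp add: matrix_vector_mul_linear)
  have "inj ((*v) A)"
    by (rule injI) (metis BA matrix_vector_mul_assoc matrix_vector_mul_lid)
  then have "dim ((*v) A ` X) = dim X"
    using dim_image_eq[OF lin] by (simp add: inj_on_def)
  then have "(*v) A ` X = X"
    using AX by (intro subspace_dim_equal linear_subspace_image[OF lin X] X) auto
  then obtain w' where "w' \<in> X" "w = A *v w'"
    using w by blast
  then show ?thesis
    using BA by (simp add: matrix_vector_mul_assoc)
qed

lemma generated_GL_preserves_subspace: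
  assumes sg: "is_subgroup_GL (generated_GL S)" and X: "subspace X"
    and SX: "\<And>s w. s \<in> S \<Longrightarrow> w \<in> X \<Longrightarrow> real_mat s *v w \<in> X"
    and g: "g \<in> generated_GL S" and w: "w \<in> X"
  shows "real_mat g *v w \<in> X"
proof -
  define H where "H = {A \<in> generated_GL S. \<forall>w\<in>X. real_mat A *v w \<in> X}"
  have "is_subgroup_GL H"
    unfolding is_subgroup_GL_def
  proof (intro conjI ballI)
    show "H \<subseteq> GL_int" "mat 1 \<in> H"
      using sg by (auto simp: H_def is_subgroup_GL_def real_mat_one)
  next
    fix A B
    assume "A \<in> H" "B \<in> H"
    then show "A ** B \<in> H"
      using sg by (auto simp: H_def is_subgroup_GL_def real_mat_mult simp flip: matrix_vector_mul_assoc)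
  next
    fix A
    assume A: "A \<in> H"
    then obtain B where B: "B \<in> generated_GL S" "A ** B = mat 1" "B ** A = mat 1"
      using sg by (auto simp: H_def is_subgroup_GL_def)
    have "real_mat B ** real_mat A = mat 1"
      using B(3) by (simp add: real_mat_one flip: real_mat_mult)
    then have "B \<in> H"
      using A B(1) inverse_preserves_subspace[OF _ X] by (auto simp: H_def)
    then show "\<exists>B\<in>H. A ** B = mat 1 \<and> B ** A = mat 1"
      using B by blast
  qed
  moreover have "S \<subseteq> H"
    using SX by (auto simp: H_def generated_GL_def)
  ultimately have "generated_GL S \<subseteq> H"
    by (auto simp: generated_GL_def)
  then show ?thesis
    using g w by (auto simp: H_def)
qed

lemma maximal_polynomial_orbit_invariant:
  assumes sg: "is_subgroup_GL (generated_GL S)" and S: "\<forall>A\<in>S. unipotent A"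
    and P: "polynomial_orbit (generated_GL S) v P"
    and max: "\<And>Q. polynomial_orbit (generated_GL S) v Q \<Longrightarrow> dim (orbit_span Q) \<le> dim (orbit_span P)"
    and X: "X = orbit_span P \<or> X = span (range (poly_vec P))"
  shows "subspace X" and "\<forall>g\<in>generated_GL S. \<forall>w\<in>X. real_mat g *v w \<in> X"
proof -
  show "subspace X"
    using X by (auto simp: orbit_span_def)
  have "real_mat (u - mat 1) *v poly_vec P x \<in> orbit_span P" if "u \<in> S" for u x
    using maximal_polynomial_orbit_increment[OF sg _ _ P max] that S
    by (auto simp: generated_GL_def)
  moreover have "real_mat u = mat 1 + real_mat (u - mat 1)" for u
    by (simp add: real_mat_diff real_mat_one)
  ultimately have "real_mat u *v w \<in> X" if "u \<in> S" "w \<in> X" for u w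
    using that X span_range_invariant unfolding orbit_span_def by metis
  then show "\<forall>g\<in>generated_GL S. \<forall>w\<in>X. real_mat g *v w \<in> X"
    using generated_GL_preserves_subspace[OF sg \<open>subspace X\<close>] by blast
qed

lemma maximal_orbit_span_eq_UNIV:
  fixes \<Gamma> :: "(int^'n^'n) set"
  assumes card: "CARD('n) \<ge> 2" and sg: "is_subgroup_GL \<Gamma>" and irr: "irreducible_action \<Gamma>"
    and S: "\<forall>A\<in>S. unipotent A" "\<Gamma> = generated_GL S" and v: "v \<noteq> 0"
    and P: "polynomial_orbit \<Gamma> v P"
    and max: "\<And>Q. polynomial_orbit \<Gamma> v Q \<Longrightarrow> dim (orbit_span Q) \<le> dim (orbit_span P)"
  shows "orbit_span P = UNIV"
proof -
  have trivial_or_UNIV: "X = {0} \<or> X = UNIV"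
    if "X = orbit_span P \<or> X = span (range (poly_vec P))" for X
    using irr maximal_polynomial_orbit_invariant[OF _ S(1) _ _ that] sg P max
    unfolding irreducible_action_def S(2) by blast
  show ?thesis
  proof (rule ccontr)
    assume "orbit_span P \<noteq> UNIV"
    then have "orbit_span P = {0}"
      using trivial_or_UNIV by blast
    moreover have "poly_vec P x - poly_vec P 0 \<in> orbit_span P" for x
      by (simp add: orbit_span_def span_base)
    ultimately have "poly_vec P x = real_vec v" for x
      using P by (auto simp: polynomial_orbit_def)
    then have "range (poly_vec P) = {real_vec v}"
      by auto
    moreover have "real_vec v \<in> span {real_vec v}" "real_vec v \<noteq> 0"
      using v by (simp_all add: span_base real_vec_eq_0_iff)
    ultimately have "span {real_vec v} = UNIV"
      using trivial_or_UNIV[of "span (range (poly_vec P))"] by force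
    then have "CARD('n) \<le> 1"
      using dim_le_card[of UNIV "{real_vec v}"] by simp
    with card show False
      by simp
  qed
qed

lemma orbit_span_eq_UNIV_imp_independent:
  assumes span: "orbit_span P = UNIV"
    and comb: "[:c0:] + (\<Sum>i\<in>UNIV. smult (c i) (map_poly of_int (P i))) = (0 :: real poly)"
  shows "c0 = 0 \<and> (\<forall>i. c i = 0)"
proof -
  define cv where "cv = (\<chi> i. c i)"
  have eval: "c0 + cv \<bullet> poly_vec P x = 0" for x
    using arg_cong[OF comb, of "\<lambda>p. poly p (of_int x)"]
    by (simp add: poly_sum poly_map_poly_of_int cv_def poly_vec_def inner_vec_def)
  have "orthogonal cv (poly_vec P x - poly_vec P 0)" for x
    using eval[of x] eval[of 0] by (simp add: orthogonal_def inner_diff_right)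
  moreover have "cv \<in> span (range (\<lambda>x. poly_vec P x - poly_vec P 0))"
    using span by (simp add: orbit_span_def)
  ultimately have "orthogonal cv cv"
    using orthogonal_to_span by blast
  then have "cv = 0"
    by (simp add: orthogonal_self)
  then show ?thesis
    using eval[of 0] by (simp add: cv_def vec_eq_iff flip: zero_vec_def)
qed

theorem theorem2p1:
  fixes \<Gamma> :: "(int^'n^'n) set"
  assumes "CARD('n) \<ge> 2"
    and "is_subgroup_GL \<Gamma>"
    and "irreducible_action \<Gamma>"
    and "\<exists>S. finite S \<and> (\<forall>A\<in>S. unipotent A) \<and> \<Gamma> = generated_GL S"
    and "v \<noteq> (0::int^'n)"
  shows "\<exists>(\<gamma>::nat \<Rightarrow> int^'n^'n) (p::'n \<Rightarrow> int poly).
           (\<forall>n\<ge>1. \<gamma> n \<in> \<Gamma> \<and> \<gamma> n *v v = (\<chi> i. poly (p i) (int n))) \<and>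
           (\<forall>(c0::real) (c::'n \<Rightarrow> real).
              [:c0:] + (\<Sum>i\<in>UNIV. smult (c i) (map_poly of_int (p i))) = 0
              \<longrightarrow> c0 = 0 \<and> (\<forall>i. c i = 0))"
proof -
  obtain S where S: "\<forall>A\<in>S. unipotent A" "\<Gamma> = generated_GL S"
    using assms(4) by blast
  have "dim (orbit_span (P :: 'n \<Rightarrow> int poly)) < CARD('n) + 1" for P
    using dim_subset_UNIV[of "orbit_span P"] by simp
  then obtain P where P: "polynomial_orbit \<Gamma> v P"
    and max: "\<And>Q. polynomial_orbit \<Gamma> v Q \<Longrightarrow> dim (orbit_span Q) \<le> dim (orbit_span P)"
    using ex_has_greatest_nat[of "polynomial_orbit \<Gamma> v" _ "\<lambda>P. dim (orbit_span P)"]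
      polynomial_orbit_const[OF assms(2)] by metis
  obtain \<gamma> where "\<forall>n\<ge>1. \<gamma> n \<in> \<Gamma> \<and> \<gamma> n *v v = (\<chi> i. poly (P i) (int n))"
    using P unfolding polynomial_orbit_def by blast
  moreover have "orbit_span P = UNIV"
    using maximal_orbit_span_eq_UNIV[OF assms(1-3) S assms(5) P max] .
  ultimately show ?thesis
    using orbit_span_eq_UNIV_imp_independent by blast
qed

end
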